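(* Let $G = K \rtimes_\varphi \langle t\rangle$ be a finitely generated group, where $K$ is abelian, $\langle t\rangle$ is infinite cyclic and $\varphi\in\mathrm{Aut}(K)$. Let $R$ be a finite symmetric subset of $K$ such that $S=R\cup\{t^{\pm1}\}$ generates $G$. Then for every $g=(x,t^m)\in G$ with $m\ge0$ there is a word $w\in W'$ that is a geodesic and represents $g$.
   Context: $K$ is written additively and elements of $G$ are pairs $(x,t^m)$ with $(x,t^m)(x',t^{m'})=(x+\varphi^m(x'),t^{m+m'})$; $m$ is the $t$-exponent sum of $(x,t^m)$. $W(R)$ denotes the set of words in the alphabet $R$. The length of a word is the length of its free reduction; a word is a geodesic if its length equals the word length (w.r.t. $S$) of the element it represents. $W'$ is the set of geodesic words of the form $t^{-p}u_0\,t\,u_1\,t\cdots u_{d-1}\,t\,u_d\,t^{-q}t^{m}$ with integers $p,q,m\ge0$, $d=p+q$ and $u_0,\dots,u_d\in W(R)$. *)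

theory Defs
  imports Main
begin

text \<open>Elements of G = K \<rtimes>_phi <t> are pairs (x, m) with x in K and m the t-exponent.\<close>

definition phi_pow :: "('k \<Rightarrow> 'k) \<Rightarrow> int \<Rightarrow> 'k \<Rightarrow> 'k" where
  "phi_pow phi m = (if 0 \<le> m then phi ^^ nat m else (inv phi) ^^ nat (- m))"

definition gmult :: "('k::ab_group_add \<Rightarrow> 'k) \<Rightarrow> 'k \<times> int \<Rightarrow> 'k \<times> int \<Rightarrow> 'k \<times> int" where
  "gmult phi g h = (fst g + phi_pow phi (snd g) (fst h), snd g + snd h)"

definition ginv :: "('k::ab_group_add \<Rightarrow> 'k) \<Rightarrow> 'k \<times> int \<Rightarrow> 'k \<times> int" where
  "ginv phi g = (- phi_pow phi (- snd g) (fst g), - snd g)"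

definition gone :: "'k::ab_group_add \<times> int" where
  "gone = (0, 0)"

inductive_set gen_subgroup :: "('k::ab_group_add \<Rightarrow> 'k) \<Rightarrow> ('k \<times> int) set \<Rightarrow> ('k \<times> int) set"
  for phi A where
  gen_one: "gone \<in> gen_subgroup phi A"
| gen_base: "a \<in> A \<Longrightarrow> a \<in> gen_subgroup phi A"
| gen_mult: "a \<in> gen_subgroup phi A \<Longrightarrow> b \<in> gen_subgroup phi A \<Longrightarrow> gmult phi a b \<in> gen_subgroup phi A"
| gen_inv: "a \<in> gen_subgroup phi A \<Longrightarrow> ginv phi a \<in> gen_subgroup phi A"

datatype 'k letter = Gen 'k | Tp | Tm

fun letter_val :: "'k::ab_group_add letter \<Rightarrow> 'k \<times> int" where
  "letter_val (Gen r) = (r, 0)"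
| "letter_val Tp = (0, 1)"
| "letter_val Tm = (0, -1)"

fun inv_letter :: "'k::ab_group_add letter \<Rightarrow> 'k letter" where
  "inv_letter (Gen r) = Gen (- r)"
| "inv_letter Tp = Tm"
| "inv_letter Tm = Tp"

definition letters :: "'k set \<Rightarrow> 'k letter set" where
  "letters R = Gen ` R \<union> {Tp, Tm}"

definition eval_word :: "('k::ab_group_add \<Rightarrow> 'k) \<Rightarrow> 'k letter list \<Rightarrow> 'k \<times> int" where
  "eval_word phi w = foldr (\<lambda>a acc. gmult phi (letter_val a) acc) w gone"

definition red_step :: "('k::ab_group_add letter list \<times> 'k letter list) set" where
  "red_step = {(u @ [a, inv_letter a] @ v, u @ v) | u a v. True}"

definition freely_reduced :: "'k::ab_group_add letter list \<Rightarrow> bool" where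
  "freely_reduced w = (\<nexists>w'. (w, w') \<in> red_step)"

definition red_length :: "'k::ab_group_add letter list \<Rightarrow> nat" where
  "red_length w = (LEAST n. \<exists>w'. (w, w') \<in> red_step\<^sup>* \<and> freely_reduced w' \<and> length w' = n)"

definition word_length :: "('k::ab_group_add \<Rightarrow> 'k) \<Rightarrow> 'k set \<Rightarrow> 'k \<times> int \<Rightarrow> nat" where
  "word_length phi R g = (LEAST n. \<exists>w. set w \<subseteq> letters R \<and> length w = n \<and> eval_word phi w = g)"

definition geodesic :: "('k::ab_group_add \<Rightarrow> 'k) \<Rightarrow> 'k set \<Rightarrow> 'k letter list \<Rightarrow> bool" where
  "geodesic phi R w = (set w \<subseteq> letters R \<and> red_length w = word_length phi R (eval_word phi w))"

definition W_form :: "'k set \<Rightarrow> 'k letter list \<Rightarrow> bool" where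
  "W_form R w = (\<exists>p q m u0 us. length us = p + q \<and> (\<forall>u \<in> set (u0 # us). set u \<subseteq> Gen ` R) \<and>
      w = replicate p Tm @ u0 @ concat (map (\<lambda>u. Tp # u) us) @ replicate q Tm @ replicate m Tp)"

definition W' :: "('k::ab_group_add \<Rightarrow> 'k) \<Rightarrow> 'k set \<Rightarrow> 'k letter list set" where
  "W' phi R = {w. W_form R w \<and> geodesic phi R w}"

end

theory Submission
  imports Defs "HOL-Library.Multiset"
begin

text \<open>Take a shortest word \<open>w\<close> for \<open>g\<close>. Reading \<open>w\<close> from the left, each letter \<open>r \<in> R\<close> sits at the
  height \<open>h\<close> given by the \<open>t\<close>-exponent of the prefix before it and contributes \<open>\<phi>\<^sup>h(r)\<close> to the
  \<open>K\<close>-coordinate of \<open>g\<close>. Since \<open>K\<close> is abelian, these letters may be regrouped by height: if the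
  heights of the prefixes range over \<open>[-p, q]\<close> and \<open>w\<close> ends at height \<open>m \<ge> 0\<close>, the word
  \<open>t\<^sup>-\<^sup>p u\<^sub>0 t u\<^sub>1 \<dots> t u\<^sub>p\<^sub>+\<^sub>q t\<^sup>-\<^sup>q t\<^sup>m\<close>, where \<open>u\<^sub>j\<close> lists the letters of \<open>w\<close> at height \<open>j - p\<close>,
  also represents \<open>g\<close>. Its free reduction has length \<open>|w|\<^sub>R + 2p + 2q - m\<close>, where \<open>|w|\<^sub>R\<close> counts
  the letters of \<open>w\<close> from \<open>R\<close>. On the other hand the height path of \<open>w\<close> starts at \<open>0\<close>, visits
  \<open>-p\<close> and \<open>q\<close> and ends at \<open>m\<close>, so \<open>w\<close> has at least \<open>p + q - m\<close> letters \<open>t\<^sup>-\<^sup>1\<close> and \<open>p + q\<close>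
  letters \<open>t\<close>. Hence the regrouped word is no longer than \<open>w\<close>, i.e. it is a geodesic.\<close>

section \<open>The semidirect product\<close>

lemma funpow_additive:
  fixes f :: "'a::plus \<Rightarrow> 'a"
  assumes "\<And>a b. f (a + b) = f a + f b"
  shows "(f ^^ n) (a + b) = (f ^^ n) a + (f ^^ n) b"
  by (induction n) (simp_all add: assms)

lemma phi_pow_exp_0 [simp]: "phi_pow phi 0 x = x"
  by (simp add: phi_pow_def)

locale semidirect_product =
  fixes phi :: "'k::ab_group_add \<Rightarrow> 'k"
  assumes bij_phi: "bij phi"
    and phi_add: "\<And>a b. phi (a + b) = phi a + phi b"
begin

lemma phi_inv [simp]: "phi (inv phi x) = x"
  by (meson bij_phi bij_inv_eq_iff)

lemma inv_phi [simp]: "inv phi (phi x) = x"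
  by (simp add: bij_is_inj[OF bij_phi])

lemma inv_phi_add: "inv phi (a + b) = inv phi a + inv phi b"
  by (metis bij_phi bij_is_inj injD phi_add phi_inv)

lemma phi_pow_add: "phi_pow phi k (a + b) = phi_pow phi k a + phi_pow phi k b"
  unfolding phi_pow_def
  using funpow_additive[of phi] funpow_additive[of "inv phi"] phi_add inv_phi_add by auto

lemma phi_pow_0 [simp]: "phi_pow phi k 0 = 0"
  using phi_pow_add[of k 0 0] by simp

lemma phi_pow_minus: "phi_pow phi k (- a) = - phi_pow phi k a"
  using phi_pow_add[of k a "- a"] by (simp add: eq_neg_iff_add_eq_0 add.commute)

lemma phi_pow_exp_succ: "phi_pow phi (a + 1) x = phi (phi_pow phi a x)"
proof (cases "0 \<le> a")
  case True
  then have "nat (a + 1) = Suc (nat a)" by simp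
  with True show ?thesis by (simp add: phi_pow_def)
next
  case False
  then obtain k where k: "nat (- a) = Suc k" "nat (- (a + 1)) = k" by (intro that) auto
  have "phi_pow phi (a + 1) = inv phi ^^ k"
    using False k(2) unfolding phi_pow_def by (cases "a = -1") auto
  moreover have "phi_pow phi a x = inv phi ((inv phi ^^ k) x)"
    using False k(1) unfolding phi_pow_def by simp
  ultimately show ?thesis by simp
qed

lemma phi_pow_exp_pred: "phi_pow phi (a - 1) x = inv phi (phi_pow phi a x)"
  using phi_pow_exp_succ[of "a - 1"] by simp

lemma phi_pow_exp_add: "phi_pow phi (a + b) x = phi_pow phi a (phi_pow phi b x)"
proof (induction a rule: int_induct[where k = 0])
  case (step1 i)
  then show ?case using phi_pow_exp_succ[of "i + b"] phi_pow_exp_succ[of i]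
    by (simp add: ac_simps)
next
  case (step2 i)
  then show ?case using phi_pow_exp_pred[of "i + b"] phi_pow_exp_pred[of i]
    by (simp add: algebra_simps)
qed simp

lemma gmult_assoc: "gmult phi g (gmult phi h k) = gmult phi (gmult phi g h) k"
  by (simp add: gmult_def phi_pow_add phi_pow_exp_add add.assoc)

lemma gmult_gone_left [simp]: "gmult phi gone g = g"
  by (simp add: gmult_def gone_def)

lemma gmult_gone_right [simp]: "gmult phi g gone = g"
  by (simp add: gmult_def gone_def)

lemma ginv_gone [simp]: "ginv phi gone = gone"
  by (simp add: ginv_def gone_def)

lemma ginv_gmult: "ginv phi (gmult phi g h) = gmult phi (ginv phi h) (ginv phi g)"
proof -
  obtain a s b t where g: "g = (a, s)" and h: "h = (b, t)" by fastforce
  have "phi_pow phi (- s - t) a = phi_pow phi (- t) (phi_pow phi (- s) a)"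
    using phi_pow_exp_add[of "- t" "- s" a] by (simp add: algebra_simps)
  moreover have "phi_pow phi (- s - t) (phi_pow phi s b) = phi_pow phi (- t) b"
    using phi_pow_exp_add[of "- s - t" s b] by simp
  ultimately show ?thesis
    unfolding g h gmult_def ginv_def by (simp add: phi_pow_add phi_pow_minus)
qed

end

section \<open>Words\<close>

lemma eval_word_Nil [simp]: "eval_word phi [] = gone"
  by (simp add: eval_word_def)

lemma eval_word_Cons: "eval_word phi (a # w) = gmult phi (letter_val a) (eval_word phi w)"
  by (simp add: eval_word_def)

lemma inv_letter_in_letters:
  assumes "\<And>r. r \<in> R \<Longrightarrow> - r \<in> R" and "a \<in> letters R"
  shows "inv_letter a \<in> letters R"
  using assms by (cases a) (auto simp: letters_def)

context semidirect_product
begin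

lemma eval_word_append: "eval_word phi (u @ v) = gmult phi (eval_word phi u) (eval_word phi v)"
  by (induction u) (simp_all add: eval_word_Cons gmult_assoc)

lemma eval_word_rev_inv: "eval_word phi (rev (map inv_letter w)) = ginv phi (eval_word phi w)"
proof -
  have "ginv phi (letter_val a) = letter_val (inv_letter a)" for a
    by (cases a) (simp_all add: ginv_def)
  then show ?thesis
    by (induction w) (simp_all add: eval_word_append eval_word_Cons ginv_gmult)
qed

lemma eval_word_cancel: "eval_word phi (a # inv_letter a # v) = eval_word phi v"
proof -
  have "eval_word phi [a, inv_letter a] = gone"
    using phi_pow_exp_succ[of 0] phi_pow_exp_pred[of 0]
    by (cases a) (simp_all add: eval_word_Cons gmult_def gone_def)
  then show ?thesis using eval_word_append[of "[a, inv_letter a]" v] by simp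
qed

lemma gen_subgroup_imp_word:
  assumes "g \<in> gen_subgroup phi (letter_val ` letters R)" and "\<And>r. r \<in> R \<Longrightarrow> - r \<in> R"
  shows "\<exists>w. set w \<subseteq> letters R \<and> eval_word phi w = g"
  using assms(1)
proof induct
  case gen_one
  show ?case by (intro exI[of _ "[]"]) simp
next
  case (gen_base a)
  then obtain l where "l \<in> letters R" "a = letter_val l" by auto
  then show ?case by (intro exI[of _ "[l]"]) (simp add: eval_word_Cons)
next
  case (gen_mult a b)
  then obtain u v where "set u \<subseteq> letters R" "eval_word phi u = a"
    "set v \<subseteq> letters R" "eval_word phi v = b"
    by blast
  then show ?case by (intro exI[of _ "u @ v"]) (simp add: eval_word_append)
next
  case (gen_inv a)
  then obtain u where "set u \<subseteq> letters R" "eval_word phi u = a" by blast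
  with inv_letter_in_letters[OF assms(2)] show ?case
    by (intro exI[of _ "rev (map inv_letter u)"]) (auto simp: eval_word_rev_inv)
qed

lemma shortest_word_exists:
  assumes "\<exists>w. set w \<subseteq> letters R \<and> eval_word phi w = g"
  obtains w where "set w \<subseteq> letters R" "length w = word_length phi R g" "eval_word phi w = g"
proof -
  from assms have "\<exists>n w. set w \<subseteq> letters R \<and> length w = n \<and> eval_word phi w = g" by blast
  from LeastI_ex[OF this] show ?thesis
    using that unfolding word_length_def by blast
qed

end

section \<open>Free reduction\<close>

lemma red_stepE:
  assumes "(w, w') \<in> red_step"
  obtains u a v where "w = u @ [a, inv_letter a] @ v" "w' = u @ v"
  using assms unfolding red_step_def by blast

lemma red_stepI: "(u @ [a, inv_letter a] @ v, u @ v) \<in> red_step"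
  unfolding red_step_def by blast

lemma red_step_length: "(w, w') \<in> red_step \<Longrightarrow> length w = length w' + 2"
  by (erule red_stepE) simp

lemma red_steps_length: "(w, w') \<in> red_step\<^sup>* \<Longrightarrow> length w' \<le> length w"
  by (induction rule: rtrancl_induct) (auto dest: red_step_length)

lemma red_steps_set: "(w, w') \<in> red_step\<^sup>* \<Longrightarrow> set w' \<subseteq> set w"
  by (induction rule: rtrancl_induct) (auto elim!: red_stepE)

lemma red_steps_append:
  assumes "(x, y) \<in> red_step\<^sup>*"
  shows "(u @ x @ v, u @ y @ v) \<in> red_step\<^sup>*"
  using assms
proof (induction rule: rtrancl_induct)
  case (step y z)
  from \<open>(y, z) \<in> red_step\<close> have "(u @ y @ v, u @ z @ v) \<in> red_step"
    by (auto elim!: red_stepE intro: red_stepI[of "u @ _" _ "_ @ v", simplified])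
  with step.IH show ?case by (rule rtrancl_into_rtrancl)
qed simp

lemma freely_reduced_exists: "\<exists>w'. (w, w') \<in> red_step\<^sup>* \<and> freely_reduced w'"
proof (induction "length w" arbitrary: w rule: less_induct)
  case less
  show ?case
  proof (cases "freely_reduced w")
    case False
    then obtain w1 where step: "(w, w1) \<in> red_step" unfolding freely_reduced_def by blast
    then have "length w1 < length w" by (simp add: red_step_length)
    with less obtain w' where "(w1, w') \<in> red_step\<^sup>*" "freely_reduced w'" by blast
    with step show ?thesis by (meson converse_rtrancl_into_rtrancl)
  qed blast
qed

lemma red_length_witness:
  "\<exists>w'. (w, w') \<in> red_step\<^sup>* \<and> freely_reduced w' \<and> length w' = red_length w"
proof -
  have "\<exists>n w'. (w, w') \<in> red_step\<^sup>* \<and> freely_reduced w' \<and> length w' = n"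
    using freely_reduced_exists by blast
  from LeastI_ex[OF this] show ?thesis unfolding red_length_def by blast
qed

lemma red_length_le_reduct:
  assumes "(w, w1) \<in> red_step\<^sup>*"
  shows "red_length w \<le> length w1"
proof -
  obtain w' where w': "(w1, w') \<in> red_step\<^sup>*" "freely_reduced w'"
    using freely_reduced_exists by blast
  with assms have "red_length w \<le> length w'"
    unfolding red_length_def by (intro Least_le) (blast intro: rtrancl_trans)
  with red_steps_length[OF w'(1)] show ?thesis by simp
qed

lemma red_length_cancel_t_powers:
  "red_length (u @ replicate k Tm @ replicate k Tp) \<le> length u"
proof -
  have "(replicate k Tm @ replicate k Tp, []) \<in> (red_step :: ('k::ab_group_add letter list \<times> _) set)\<^sup>*"
  proof (induction k)
    case (Suc k)
    have "replicate (Suc k) Tm @ replicate (Suc k) Tp =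
        replicate k Tm @ [Tm, inv_letter Tm] @ (replicate k Tp :: 'k letter list)"
      by (simp add: replicate_append_same[symmetric])
    with red_stepI[of "replicate k Tm" Tm "replicate k Tp :: 'k letter list"] Suc show ?case
      by (metis converse_rtrancl_into_rtrancl)
  qed simp
  from red_steps_append[OF this, of u "[]"] show ?thesis
    using red_length_le_reduct by fastforce
qed

context semidirect_product
begin

lemma red_steps_eval_word:
  assumes "(w, w') \<in> red_step\<^sup>*"
  shows "eval_word phi w' = eval_word phi w"
  using assms
proof (induction rule: rtrancl_induct)
  case (step y z)
  then show ?case
    by (auto elim!: red_stepE simp: eval_word_append eval_word_cancel)
qed simp

lemma word_length_le_red_length:
  assumes "set w \<subseteq> letters R"
  shows "word_length phi R (eval_word phi w) \<le> red_length w"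
proof -
  obtain w' where w': "(w, w') \<in> red_step\<^sup>*" "length w' = red_length w"
    using red_length_witness by blast
  with assms red_steps_set[OF w'(1)] red_steps_eval_word[OF w'(1)] show ?thesis
    unfolding word_length_def by (intro Least_le) blast
qed

end

section \<open>Heights\<close>

fun t_exp :: "'k letter list \<Rightarrow> int" where
  "t_exp [] = 0"
| "t_exp (Gen r # w) = t_exp w"
| "t_exp (Tp # w) = t_exp w + 1"
| "t_exp (Tm # w) = t_exp w - 1"

fun gen_heights :: "int \<Rightarrow> 'k letter list \<Rightarrow> (int \<times> 'k) list" where
  "gen_heights h [] = []"
| "gen_heights h (Gen r # w) = (h, r) # gen_heights h w"
| "gen_heights h (Tp # w) = gen_heights (h + 1) w"
| "gen_heights h (Tm # w) = gen_heights (h - 1) w"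

definition prefix_heights :: "'k letter list \<Rightarrow> int set" where
  "prefix_heights w = (\<lambda>k. t_exp (take k w)) ` {0..length w}"

lemma t_exp_append [simp]: "t_exp (u @ v) = t_exp u + t_exp v"
  by (induction u rule: t_exp.induct) auto

lemma t_exp_eq_count: "t_exp w = int (count_list w Tp) - int (count_list w Tm)"
  by (induction w rule: t_exp.induct) auto

lemma length_eq_counts: "length w = length (gen_heights h w) + count_list w Tp + count_list w Tm"
  by (induction h w rule: gen_heights.induct) auto

lemma gen_heights_append: "gen_heights h (u @ v) = gen_heights h u @ gen_heights (h + t_exp u) v"
  by (induction h u rule: gen_heights.induct) (auto simp: algebra_simps)

lemma gen_heights_mem:
  assumes "(h', r) \<in> set (gen_heights h w)"
  shows "Gen r \<in> set w" and "h' - h \<in> prefix_heights w"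
proof -
  have "Gen r \<in> set w \<and> (\<exists>k\<le>length w. h' = h + t_exp (take k w))"
    using assms
  proof (induction h w rule: gen_heights.induct)
    case (2 h r' w)
    show ?case
    proof (cases "(h', r) = (h, r')")
      case True
      then show ?thesis by (intro conjI exI[of _ 0]) auto
    next
      case False
      with 2 obtain k where "Gen r \<in> set w" "k \<le> length w" "h' = h + t_exp (take k w)" by auto
      then show ?thesis by (intro conjI exI[of _ "Suc k"]) auto
    qed
  next
    case (3 h w)
    then obtain k where "Gen r \<in> set w" "k \<le> length w" "h' = h + 1 + t_exp (take k w)" by auto
    then show ?case by (intro conjI exI[of _ "Suc k"]) auto
  next
    case (4 h w)
    then obtain k where "Gen r \<in> set w" "k \<le> length w" "h' = h - 1 + t_exp (take k w)" by auto
    then show ?case by (intro conjI exI[of _ "Suc k"]) auto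
  qed simp
  then show "Gen r \<in> set w" and "h' - h \<in> prefix_heights w"
    unfolding prefix_heights_def by auto
qed

lemma prefix_heights_finite: "finite (prefix_heights w)"
  by (simp add: prefix_heights_def)

lemma prefix_heights_0: "0 \<in> prefix_heights w"
  unfolding prefix_heights_def by (force intro: image_eqI[of _ _ 0])

lemma prefix_heights_t_exp: "t_exp w \<in> prefix_heights w"
  unfolding prefix_heights_def by (force intro: image_eqI[of _ _ "length w"])

lemma neg_t_exp_le_count_Tm: "- t_exp w \<le> int (count_list w Tm)"
  by (simp add: t_exp_eq_count)

lemma count_Tm_ge_height_range:
  assumes "a \<in> prefix_heights w" "b \<in> prefix_heights w" "0 \<le> t_exp w"
  shows "b - a - t_exp w \<le> int (count_list w Tm)"
proof -
  from assms obtain i j where a: "a = t_exp (take i w)" and b: "b = t_exp (take j w)"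
    unfolding prefix_heights_def by auto
  show ?thesis
  proof (cases "i \<le> j")
    case True
    define seg where "seg = take (j - i) (drop i w)"
    have "take j w = take i w @ seg"
      using True unfolding seg_def by (metis le_add_diff_inverse take_add)
    then have w: "w = take i w @ seg @ drop j w"
      by (metis append.assoc append_take_drop_id)
    have "t_exp w = b + t_exp (drop j w)"
      using b by (metis append_take_drop_id t_exp_append)
    moreover have "count_list w Tm \<ge> count_list (take i w) Tm + count_list (drop j w) Tm"
      by (subst w) simp
    ultimately show ?thesis
      using a neg_t_exp_le_count_Tm[of "take i w"] neg_t_exp_le_count_Tm[of "drop j w"] by linarith
  next
    case False
    define seg where "seg = take (i - j) (drop j w)"
    have "take i w = take j w @ seg"
      using False unfolding seg_def by (metis le_add_diff_inverse nat_le_linear take_add)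
    then have w: "w = take j w @ seg @ drop i w"
      by (metis append.assoc append_take_drop_id)
    have "t_exp seg = a - b"
      using a b \<open>take i w = take j w @ seg\<close> by simp
    moreover have "count_list w Tm \<ge> count_list seg Tm"
      by (subst w) simp
    ultimately show ?thesis
      using neg_t_exp_le_count_Tm[of seg] assms(3) by linarith
  qed
qed

lemma gen_heights_range:
  assumes "x \<in> set (gen_heights 0 w)"
  shows "Min (prefix_heights w) \<le> fst x \<and> fst x \<le> Max (prefix_heights w)"
  using gen_heights_mem(2)[of "fst x" "snd x" 0 w] assms
  by (simp add: Min_le Max_ge prefix_heights_finite)

lemma length_ge_height_span:
  assumes "0 \<le> t_exp w"
  shows "int (length (gen_heights 0 w)) + 2 * (Max (prefix_heights w) - Min (prefix_heights w))
    \<le> int (length w) + t_exp w"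
proof -
  have "Min (prefix_heights w) \<in> prefix_heights w" "Max (prefix_heights w) \<in> prefix_heights w"
    using prefix_heights_0[of w] by (auto intro!: Min_in Max_in prefix_heights_finite)
  from count_Tm_ge_height_range[OF this assms]
  have "Max (prefix_heights w) - Min (prefix_heights w) - t_exp w \<le> int (count_list w Tm)" .
  moreover have "int (length w) =
      int (length (gen_heights 0 w)) + int (count_list w Tp) + int (count_list w Tm)"
    using length_eq_counts[of w 0] by simp
  ultimately show ?thesis
    unfolding right_diff_distrib using t_exp_eq_count[of w] by linarith
qed

text \<open>\<open>(phi_pow phi h r, 0)\<close> is the conjugate \<open>t\<^sup>h r t\<^sup>-\<^sup>h\<close>.\<close>

definition conj_sum :: "('k::ab_group_add \<Rightarrow> 'k) \<Rightarrow> (int \<times> 'k) list \<Rightarrow> 'k" where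
  "conj_sum phi L = (\<Sum>(h, r)\<leftarrow>L. phi_pow phi h r)"

lemma conj_sum_mset_eq: "mset L = mset L' \<Longrightarrow> conj_sum phi L = conj_sum phi L'"
  unfolding conj_sum_def by (metis mset_map sum_mset_sum_list)

context semidirect_product
begin

lemma phi_pow_fst_eval_word: "phi_pow phi h (fst (eval_word phi w)) = conj_sum phi (gen_heights h w)"
proof (induction w arbitrary: h rule: t_exp.induct)
  case 1
  then show ?case by (simp add: conj_sum_def gone_def)
next
  case (2 r w)
  then show ?case by (simp add: conj_sum_def eval_word_Cons gmult_def phi_pow_add)
next
  case (3 w)
  have "phi_pow phi h (fst (eval_word phi (Tp # w))) = phi_pow phi (h + 1) (fst (eval_word phi w))"
    by (simp add: eval_word_Cons gmult_def phi_pow_exp_add)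
  with "3"[of "h + 1"] show ?case by simp
next
  case (4 w)
  have "phi_pow phi h (fst (eval_word phi (Tm # w))) = phi_pow phi (h - 1) (fst (eval_word phi w))"
    using phi_pow_exp_add[of h "-1"] by (simp add: eval_word_Cons gmult_def)
  with "4"[of "h - 1"] show ?case by simp
qed

lemma eval_word_eq: "eval_word phi w = (conj_sum phi (gen_heights 0 w), t_exp w)"
proof -
  have "snd (eval_word phi w) = t_exp w"
    by (induction w rule: t_exp.induct) (simp_all add: eval_word_Cons gmult_def gone_def)
  with phi_pow_fst_eval_word[of 0 w] show ?thesis by (metis phi_pow_exp_0 prod.collapse)
qed

end

section \<open>Regrouping a word by heights\<close>

definition level_block :: "int \<Rightarrow> (int \<times> 'k) list \<Rightarrow> 'k letter list" where
  "level_block h L = map (Gen \<circ> snd) (filter (\<lambda>x. fst x = h) L)"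

definition normal_word :: "nat \<Rightarrow> nat \<Rightarrow> nat \<Rightarrow> (int \<times> 'k) list \<Rightarrow> 'k letter list" where
  "normal_word p q m L = replicate p Tm @ level_block (- int p) L @
     concat (map (\<lambda>j. Tp # level_block (- int p + int j) L) [1..<Suc (p + q)]) @
     replicate q Tm @ replicate m Tp"

lemma normal_word_W_form:
  assumes "snd ` set L \<subseteq> R"
  shows "W_form R (normal_word p q m L)"
  unfolding W_form_def normal_word_def
  using assms by (intro exI[of _ p] exI[of _ q] exI[of _ m] exI[of _ "level_block (- int p) L"]
      exI[of _ "map (\<lambda>j. level_block (- int p + int j) L) [1..<Suc (p + q)]"])
    (auto simp: level_block_def comp_def)

lemma normal_word_letters:
  assumes "snd ` set L \<subseteq> R"
  shows "set (normal_word p q m L) \<subseteq> letters R"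
  using assms by (auto simp: normal_word_def level_block_def letters_def)

lemma count_list_replicate_self [simp]: "count_list (replicate k x) x = k"
  by (induction k) auto

lemma t_exp_replicate [simp]:
  "t_exp (replicate k Tm) = - int k" "t_exp (replicate k Tp) = int k"
  by (induction k) auto

lemma gen_heights_replicate [simp]:
  "gen_heights h (replicate k Tm) = []" "gen_heights h (replicate k Tp) = []"
  by (induction k arbitrary: h) auto

lemma t_exp_level_block [simp]: "t_exp (level_block h L) = 0"
  by (induction L) (auto simp: level_block_def)

lemma gen_heights_level_block [simp]: "gen_heights h (level_block h L) = filter (\<lambda>x. fst x = h) L"
  by (induction L) (auto simp: level_block_def)

lemma t_exp_level_blocks [simp]:
  "t_exp (concat (map (\<lambda>j. Tp # level_block (f j) L) js)) = int (length js)"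
  by (induction js) auto

lemma gen_heights_level_blocks:
  "gen_heights h (concat (map (\<lambda>j. Tp # level_block (h + int j) L) [1..<Suc n])) =
    concat (map (\<lambda>j. filter (\<lambda>x. fst x = h + int j) L) [1..<Suc n])"
proof (induction n)
  case (Suc n)
  have "[1..<Suc (Suc n)] = [1..<Suc n] @ [Suc n]" by simp
  with Suc show ?case by (simp add: gen_heights_append ac_simps del: upt_Suc)
qed simp

lemma gen_heights_normal_word:
  "gen_heights 0 (normal_word p q m L) =
    concat (map (\<lambda>j. filter (\<lambda>x. fst x = - int p + int j) L) [0..<Suc (p + q)])"
  using gen_heights_level_blocks[of "- int p" L "p + q"]
  by (simp add: normal_word_def gen_heights_append upt_conv_Cons del: upt_Suc)

lemma mset_concat_filter_partition:
  assumes "\<forall>x\<in>set L. f x < N"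
  shows "mset (concat (map (\<lambda>j. filter (\<lambda>x. f x = j) L) [0..<N])) = mset L"
  using assms
proof (induction L)
  case (Cons y L)
  have "(\<Sum>j\<leftarrow>[0..<N]. mset (filter (\<lambda>x. f x = j) (y # L))) =
      (\<Sum>j\<leftarrow>[0..<N]. (if f y = j then {#y#} else {#}) + mset (filter (\<lambda>x. f x = j) L))"
    by (intro arg_cong[of _ _ sum_list] map_cong) auto
  also have "\<dots> = (\<Sum>j<N. if f y = j then {#y#} else {#}) + mset L"
    using Cons by (simp add: interv_sum_list_conv_sum_set_nat sum.distrib mset_concat comp_def
        lessThan_atLeast0)
  finally show ?case using Cons.prems by (simp add: mset_concat comp_def)
qed simp

lemma mset_gen_heights_normal_word:
  assumes "\<forall>x\<in>set L. - int p \<le> fst x \<and> fst x \<le> int q"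
  shows "mset (gen_heights 0 (normal_word p q m L)) = mset L"
proof -
  have "filter (\<lambda>x. fst x = - int p + int j) L = filter (\<lambda>x. nat (fst x + int p) = j) L" for j
    using assms by (intro filter_cong) auto
  with assms show ?thesis
    by (simp only: gen_heights_normal_word) (rule mset_concat_filter_partition, auto)
qed

lemma t_exp_normal_word [simp]: "t_exp (normal_word p q m L) = int m"
  by (simp add: normal_word_def)

lemma length_normal_word:
  assumes "\<forall>x\<in>set L. - int p \<le> fst x \<and> fst x \<le> int q"
  shows "length (normal_word p q m L) = length L + 2 * p + 2 * q + m"
proof -
  have "count_list (normal_word p q m L) Tm = p + q"
  proof -
    have "Tm \<notin> set (level_block h L)" for h
      by (auto simp: level_block_def)
    then show ?thesis by (simp add: normal_word_def count_list_0_iff del: upt_Suc)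
  qed
  moreover have "length (gen_heights 0 (normal_word p q m L)) = length L"
    by (metis mset_gen_heights_normal_word[OF assms] size_mset)
  ultimately show ?thesis
    using length_eq_counts[of "normal_word p q m L" 0] t_exp_eq_count[of "normal_word p q m L"]
      t_exp_normal_word[of p q m L] by presburger
qed

lemma red_length_normal_word:
  assumes "\<forall>x\<in>set L. - int p \<le> fst x \<and> fst x \<le> int q" and "m \<le> q"
  shows "red_length (normal_word p q m L) + m \<le> length L + 2 * p + 2 * q"
proof -
  obtain u where u: "normal_word p q m L = u @ replicate m Tm @ replicate m Tp"
  proof
    from \<open>m \<le> q\<close> have "replicate q Tm = replicate (q - m) Tm @ (replicate m Tm :: 'a letter list)"
      by (metis le_add_diff_inverse2 replicate_add)
    then show "normal_word p q m L = (replicate p Tm @ level_block (- int p) L @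
        concat (map (\<lambda>j. Tp # level_block (- int p + int j) L) [1..<Suc (p + q)]) @
        replicate (q - m) Tm) @ replicate m Tm @ replicate m Tp"
      by (simp add: normal_word_def)
  qed
  have "red_length (normal_word p q m L) \<le> length u"
    unfolding u by (rule red_length_cancel_t_powers)
  with length_normal_word[OF assms(1), of m] show ?thesis
    unfolding u by simp
qed

context semidirect_product
begin

lemma eval_word_normal_word:
  assumes "\<forall>x\<in>set L. - int p \<le> fst x \<and> fst x \<le> int q"
  shows "eval_word phi (normal_word p q m L) = (conj_sum phi L, int m)"
  using conj_sum_mset_eq[OF mset_gen_heights_normal_word[OF assms]] by (simp add: eval_word_eq)

lemma W_form_shortening:
  assumes "set w \<subseteq> letters R" and "0 \<le> t_exp w"
  obtains W where "W_form R W" "set W \<subseteq> letters R"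
    "eval_word phi W = eval_word phi w" "red_length W \<le> length w"
proof -
  define H where "H = prefix_heights w"
  have H: "finite H" "0 \<in> H" "t_exp w \<in> H"
    unfolding H_def by (simp_all add: prefix_heights_finite prefix_heights_0 prefix_heights_t_exp)
  define p q m where "p = nat (- Min H)" and "q = nat (Max H)" and "m = nat (t_exp w)"
  have Min: "Min H = - int p"
    using Min_le[OF H(1,2)] unfolding p_def by simp
  have Max: "Max H = int q"
    using Max_ge[OF H(1,2)] unfolding q_def by simp
  have m: "t_exp w = int m"
    using assms(2) unfolding m_def by simp
  have "m \<le> q"
    using Max_ge[OF H(1,3)] Max m by simp
  define L where "L = gen_heights 0 w"
  have range: "\<forall>x\<in>set L. - int p \<le> fst x \<and> fst x \<le> int q"
    using gen_heights_range[of _ w] Min Max unfolding L_def H_def by simp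
  have R: "snd ` set L \<subseteq> R"
    using gen_heights_mem(1)[of _ _ 0 w] assms(1) unfolding L_def letters_def by force
  have "int (length L) + 2 * int p + 2 * int q \<le> int (length w) + int m"
    using length_ge_height_span[OF assms(2)] Min Max m unfolding L_def H_def by simp
  then have "red_length (normal_word p q m L) \<le> length w"
    using red_length_normal_word[OF range \<open>m \<le> q\<close>] by linarith
  moreover have "eval_word phi (normal_word p q m L) = eval_word phi w"
    using eval_word_normal_word[OF range] m by (simp add: eval_word_eq L_def)
  ultimately show thesis
    using that normal_word_W_form[OF R] normal_word_letters[OF R] by blast
qed

end

theorem lemma2p1:
  fixes phi :: "'k::ab_group_add \<Rightarrow> 'k" and R :: "'k set" and x :: 'k and m :: int
  assumes "bij phi"
    and "\<And>a b. phi (a + b) = phi a + phi b"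
    and "finite R"
    and "\<And>r. r \<in> R \<Longrightarrow> - r \<in> R"
    and "gen_subgroup phi (letter_val ` letters R) = UNIV"
    and "0 \<le> m"
  shows "\<exists>w \<in> W' phi R. geodesic phi R w \<and> eval_word phi w = (x, m)"
proof -
  interpret semidirect_product phi
    using assms(1,2) by unfold_locales
  have "\<exists>w. set w \<subseteq> letters R \<and> eval_word phi w = (x, m)"
    using gen_subgroup_imp_word[of "(x, m)" R] assms(4,5) by simp
  then obtain w where w: "set w \<subseteq> letters R" "length w = word_length phi R (x, m)"
    "eval_word phi w = (x, m)"
    by (rule shortest_word_exists)
  have "0 \<le> t_exp w"
    using w(3) assms(6) by (simp add: eval_word_eq)
  then obtain W where W: "W_form R W" "set W \<subseteq> letters R" "eval_word phi W = (x, m)"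
    "red_length W \<le> length w"
    using W_form_shortening[OF w(1)] w(3) by metis
  have "word_length phi R (x, m) \<le> red_length W"
    using word_length_le_red_length[OF W(2)] W(3) by simp
  with W w have "geodesic phi R W"
    unfolding geodesic_def by simp
  with W show ?thesis
    unfolding W'_def by auto
qed

end
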